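(* Let $\mathcal{R}>0$, $\alpha>0$, $\beta>0$ be fixed, and let $\bar\gamma_{\mathrm{D}}>0$ with $\bar\gamma_{\mathrm{R}}=\alpha\bar\gamma_{\mathrm{D}}$ and $\bar\gamma_{\mathrm{E}}=\bar\gamma_{\mathrm{R}}/\beta$. Let $h_{\mathrm{S},\mathrm{R}},h_{\mathrm{R},\mathrm{D}},h_{\mathrm{S},\mathrm{E}}$ be independent $\mathcal{CN}(0,1)$ random variables, and define $$\mathcal{R}^{2}_{\mathrm{S}\to\mathrm{R}}=\log_2\frac{1+\bar\gamma_{\mathrm{R}}|h_{\mathrm{S},\mathrm{R}}|^2}{1+\bar\gamma_{\mathrm{E}}|h_{\mathrm{S},\mathrm{E}}|^2},\qquad \mathcal{R}^{2}_{\mathrm{R}\to\mathrm{D}}=\log_2\left(1+\bar\gamma_{\mathrm{D}}|h_{\mathrm{R},\mathrm{D}}|^2\right),$$ $\mathcal{R}_2=\max\{\min\{\mathcal{R}^{2}_{\mathrm{S}\to\mathrm{R}},\mathcal{R}^{2}_{\mathrm{R}\to\mathrm{D}}\},0\}$ and $\mathcal{P}_2=\Pr(\mathcal{R}_2<\mathcal{R})$. Then as $\bar\gamma_{\mathrm{D}}\to\infty$, $$\mathcal{P}_2\approx\mathcal{P}_2^{\lim}+\hat{\mathcal{M}}_2\bar\gamma_{\mathrm{D}}^{-1},$$ in the sense that $\mathcal{P}_2\to\mathcal{P}_2^{\lim}$ and $\bar\gamma_{\mathrm{D}}(\mathcal{P}_2-\mathcal{P}_2^{\lim})\to\hat{\mathcal{M}}_2$,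 where $$\mathcal{P}_2^{\lim}=1-\frac{1}{1+\frac{1}{\beta}2^{\mathcal{R}}},\qquad \hat{\mathcal{M}}_2=\frac{(2^{\mathcal{R}}-1)(1+1/\alpha)}{1+\frac{1}{\beta}2^{\mathcal{R}}}.$$
   Context: $\mathcal{CN}(0,1)$ denotes a circularly symmetric complex Gaussian random variable with zero mean and unit variance (Rayleigh fading). The quantities model a decode-and-forward relay system where the eavesdropper overhears only the source; $\bar\gamma$'s are average SNRs, $\mathcal{R}_2$ the secrecy capacity and $\mathcal{P}_2$ the secrecy outage probability. *)

theory Defs
  imports "HOL-Probability.Probability"
begin

definition cn01_density :: "complex \<Rightarrow> real" where
  "cn01_density z = exp (- ((cmod z)^2)) / Transcendental.pi"

definition secrecy_cap2 ::
  "real \<Rightarrow> real \<Rightarrow> real \<Rightarrow> complex \<Rightarrow> complex \<Rightarrow> complex \<Rightarrow> real" where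
  "secrecy_cap2 \<alpha> \<beta> \<gamma>D hSR hRD hSE =
     (let \<gamma>R = \<alpha> * \<gamma>D; \<gamma>E = \<gamma>R / \<beta>;
          RSR = log 2 ((1 + \<gamma>R * (cmod hSR)^2) / (1 + \<gamma>E * (cmod hSE)^2));
          RRD = log 2 (1 + \<gamma>D * (cmod hRD)^2)
      in max (min RSR RRD) 0)"

definition outage_prob2 ::
  "'a measure \<Rightarrow> real \<Rightarrow> real \<Rightarrow> real \<Rightarrow> ('a \<Rightarrow> complex) \<Rightarrow> ('a \<Rightarrow> complex)
     \<Rightarrow> ('a \<Rightarrow> complex) \<Rightarrow> real \<Rightarrow> real" where
  "outage_prob2 M \<alpha> \<beta> R hSR hRD hSE \<gamma>D =
     measure M {\<omega> \<in> space M. secrecy_cap2 \<alpha> \<beta> \<gamma>D (hSR \<omega>) (hRD \<omega>) (hSE \<omega>) < R}"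

end

theory Submission
  imports Defs "HOL-Real_Asymp.Real_Asymp"
begin

(* The squared gains W_SR, W_RD, W_SE of the three channels are independent and Exp(1)-distributed:
   the squared modulus of a CN(0,1) variable is exponential.  For gamma_D > 0 the secrecy rate
   reaches R exactly when W_SR >= c/(alpha gamma_D) + (2^R/beta) W_SE and W_RD >= c/gamma_D, with
   c = 2^R - 1.  Integrating out W_SE, this event has probability
   exp(-c/(alpha gamma_D)) / (1 + 2^R/beta) * exp(-c/gamma_D).  Hence, in closed form,
   P_2 = 1 - exp(-d/gamma_D) / (1 + 2^R/beta) with d = c (1 + 1/alpha), and both limits follow
   from exp(-d/gamma_D) = 1 - d/gamma_D + o(1/gamma_D). *)

lemma nn_integral_exp_neg_mult_atLeast:
  fixes l c :: real
  assumes "0 < l"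
  shows "(\<integral>\<^sup>+u\<in>{c..}. ennreal (exp (- l * u)) \<partial>lborel) = ennreal (exp (- l * c) / l)"
proof -
  have "(\<integral>\<^sup>+u\<in>{c..}. ennreal (exp (- l * u)) \<partial>lborel) = ennreal (0 - (- exp (- l * c) / l))"
    using assms
    by (intro nn_integral_FTC_atLeast[where F="\<lambda>u. - exp (- l * u) / l"])
       (auto intro!: derivative_eq_intros, real_asymp)
  then show ?thesis by simp
qed

lemma nn_integral_exp_neg_mult_diff_atLeast:
  "(\<integral>\<^sup>+u\<in>{a..}. ennreal (exp (- u) * (u - a)) \<partial>lborel) = ennreal (exp (- a))"
proof -
  let ?F = "\<lambda>u. - (u - a + 1) * exp (- u)"
  have "(\<integral>\<^sup>+u\<in>{a..}. ennreal (exp (- u) * (u - a)) \<partial>lborel) = ennreal (0 - ?F a)"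
    by (rule nn_integral_FTC_atLeast[where F="?F"])
       (auto intro!: derivative_eq_intros simp: algebra_simps, real_asymp)
  then show ?thesis by simp
qed

lemma nn_integral_exponential_density_atLeast:
  assumes "0 < l" "0 \<le> c"
  shows "(\<integral>\<^sup>+x\<in>{c..}. ennreal (exponential_density l x) \<partial>lborel) = ennreal (exp (- c * l))"
proof -
  have "(\<integral>\<^sup>+x\<in>{c..}. ennreal (exponential_density l x) \<partial>lborel)
      = (\<integral>\<^sup>+x. ennreal l * (ennreal (exp (- l * x)) * indicator {c..} x) \<partial>lborel)"
    using assms by (intro nn_integral_cong)
      (auto simp: exponential_density_def ennreal_mult' mult.commute split: split_indicator)
  also have "\<dots> = ennreal l * ennreal (exp (- l * c) / l)"
    by (subst nn_integral_cmult, measurable) (simp only: nn_integral_exp_neg_mult_atLeast[OF assms(1)])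
  also have "\<dots> = ennreal (exp (- c * l))"
    using assms by (simp add: ennreal_mult'[symmetric] mult.commute)
  finally show ?thesis .
qed

lemma (in prob_space) exponential_distributedD_ge:
  assumes D: "distributed M lborel X (exponential_density l)" and "0 \<le> a" "0 < l"
  shows "\<P>(x in M. a \<le> X x) = exp (- a * l)"
proof -
  have "emeasure M (X -` {a..} \<inter> space M) = ennreal (exp (- a * l))"
    using distributed_emeasure[OF D, of "{a..}"] assms
    by (simp add: nn_integral_exponential_density_atLeast)
  moreover have "X -` {a..} \<inter> space M = {x \<in> space M. a \<le> X x}" by auto
  ultimately show ?thesis by (simp add: emeasure_eq_measure)
qed

lemma emeasure_complex_annulus:
  assumes "0 \<le> a" "a \<le> u"
  shows "emeasure lborel {z::complex. a < (cmod z)\<^sup>2 \<and> (cmod z)\<^sup>2 \<le> u} = ennreal (pi * (u - a))"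
proof -
  have le_sqrt: "cmod z \<le> sqrt b \<longleftrightarrow> (cmod z)\<^sup>2 \<le> b" for z :: complex and b
    by (metis abs_norm_cancel real_sqrt_abs real_sqrt_le_iff)
  have "{z::complex. a < (cmod z)\<^sup>2 \<and> (cmod z)\<^sup>2 \<le> u} = cball 0 (sqrt u) - cball 0 (sqrt a)"
    by (auto simp: le_sqrt not_le)
  moreover have "cball (0::complex) (sqrt a) \<subseteq> cball 0 (sqrt u)"
    using assms by (simp add: cball_subset_cball_iff)
  ultimately show ?thesis
    using assms by (simp add: emeasure_Diff emeasure_cball unit_ball_vol_2 ennreal_minus algebra_simps)
qed

lemma nn_integral_cn01_density_tail:
  assumes "0 \<le> a"
  shows "(\<integral>\<^sup>+z\<in>{z. a < (cmod z)\<^sup>2}. ennreal (cn01_density z) \<partial>lborel) = ennreal (exp (- a))"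
proof -
  \<comment> \<open>Layer cake: write exp(-|z|^2) as the integral of exp(-u) over u >= |z|^2 and swap the
    integrals; the inner integral becomes the area pi (u - a) of an annulus.\<close>
  define S where "S = {(z::complex, u::real). a < (cmod z)\<^sup>2 \<and> (cmod z)\<^sup>2 \<le> u}"
  define g where "g z u = ennreal (exp (- u) / pi) * indicator S (z, u)" for z u
  have "Measurable.pred (lborel \<Otimes>\<^sub>M lborel) (\<lambda>(z::complex, u::real). a < (cmod z)\<^sup>2 \<and> (cmod z)\<^sup>2 \<le> u)"
    by measurable
  then have [measurable]: "S \<in> sets (lborel \<Otimes>\<^sub>M lborel)"
    by (simp add: S_def pred_def space_pair_measure)
  have inner_u: "(\<integral>\<^sup>+u. g z u \<partial>lborel)
      = ennreal (cn01_density z) * indicator {z. a < (cmod z)\<^sup>2} z" for z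
  proof -
    have "(\<integral>\<^sup>+u. g z u \<partial>lborel) = (\<integral>\<^sup>+u. ennreal (1 / pi) * indicator {z. a < (cmod z)\<^sup>2} z
        * (ennreal (exp (- 1 * u)) * indicator {(cmod z)\<^sup>2..} u) \<partial>lborel)"
      by (intro nn_integral_cong) (auto simp: g_def S_def ennreal_mult'[symmetric] split: split_indicator)
    also have "\<dots> = ennreal (1 / pi) * indicator {z. a < (cmod z)\<^sup>2} z
        * (\<integral>\<^sup>+u\<in>{(cmod z)\<^sup>2..}. ennreal (exp (- 1 * u)) \<partial>lborel)"
      by (rule nn_integral_cmult) measurable
    also have "\<dots> = ennreal (1 / pi) * indicator {z. a < (cmod z)\<^sup>2} z
        * ennreal (exp (- 1 * (cmod z)\<^sup>2) / 1)"
      by (simp only: nn_integral_exp_neg_mult_atLeast[OF zero_less_one])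
    finally show ?thesis
      by (simp add: cn01_density_def ennreal_mult'[symmetric] split: split_indicator)
  qed
  have inner_z: "(\<integral>\<^sup>+z. g z u \<partial>lborel) = ennreal (exp (- u) * (u - a)) * indicator {a..} u" for u
  proof (cases "a \<le> u")
    case True
    have "(\<integral>\<^sup>+z. g z u \<partial>lborel)
        = ennreal (exp (- u) / pi) * emeasure lborel {z::complex. a < (cmod z)\<^sup>2 \<and> (cmod z)\<^sup>2 \<le> u}"
      by (subst nn_integral_cmult_indicator[symmetric])
         (auto intro!: nn_integral_cong simp: g_def S_def split: split_indicator)
    then show ?thesis
      using True assms by (simp add: emeasure_complex_annulus ennreal_mult'[symmetric])
  next
    case False
    then have "g z u = 0" for z
      by (simp add: g_def S_def)
    then show ?thesis
      using False by simp
  qed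
  have "(\<integral>\<^sup>+z\<in>{z. a < (cmod z)\<^sup>2}. ennreal (cn01_density z) \<partial>lborel)
      = (\<integral>\<^sup>+z. \<integral>\<^sup>+u. g z u \<partial>lborel \<partial>lborel)"
    by (simp add: inner_u)
  also have "\<dots> = (\<integral>\<^sup>+u. \<integral>\<^sup>+z. g z u \<partial>lborel \<partial>lborel)"
    by (rule lborel_pair.Fubini'[symmetric]) (simp add: g_def)
  also have "\<dots> = (\<integral>\<^sup>+u\<in>{a..}. ennreal (exp (- u) * (u - a)) \<partial>lborel)"
    by (simp add: inner_z)
  finally show ?thesis
    by (simp add: nn_integral_exp_neg_mult_diff_atLeast)
qed

lemma (in prob_space) distributed_cmod_sq_cn01:
  assumes D: "distributed M lborel h (\<lambda>z. ennreal (cn01_density z))"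
  shows "distributed M lborel (\<lambda>\<omega>. (cmod (h \<omega>))\<^sup>2) (exponential_density 1)"
proof -
  have [measurable]: "h \<in> borel_measurable M"
    using distributed_measurable[OF D] by simp
  have "\<P>(\<omega> in M. (cmod (h \<omega>))\<^sup>2 \<le> a) = 1 - exp (- a * 1)" if "0 \<le> a" for a
  proof -
    have "emeasure M (h -` {z. a < (cmod z)\<^sup>2} \<inter> space M) = ennreal (exp (- a))"
      using distributed_emeasure[OF D, of "{z. a < (cmod z)\<^sup>2}"] nn_integral_cn01_density_tail[OF that]
      by simp
    moreover have "h -` {z. a < (cmod z)\<^sup>2} \<inter> space M = {\<omega> \<in> space M. a < (cmod (h \<omega>))\<^sup>2}"
      by auto
    ultimately have "\<P>(\<omega> in M. a < (cmod (h \<omega>))\<^sup>2) = exp (- a)"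
      by (simp add: emeasure_eq_measure)
    then show ?thesis
      using prob_neg[of "\<lambda>\<omega>. a < (cmod (h \<omega>))\<^sup>2"] by (simp add: not_less)
  qed
  then show ?thesis
    by (simp add: exponential_distributed_iff)
qed

lemma (in prob_space) indep_vars_indep_var:
  assumes "indep_vars M' X I" "i \<in> I" "j \<in> I" "i \<noteq> j"
  shows "indep_var (M' i) (X i) (M' j) (X j)"
proof -
  have "indep_var (M' i) ((\<lambda>f. f i) \<circ> (\<lambda>\<omega>. restrict (\<lambda>i. X i \<omega>) {i}))
      (M' j) ((\<lambda>f. f j) \<circ> (\<lambda>\<omega>. restrict (\<lambda>i. X i \<omega>) {j}))"
    using assms
    by (intro indep_var_compose[OF indep_var_restrict[OF assms(1), of "{i}" "{j}"]]) auto
  then show ?thesis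
    by (simp add: comp_def)
qed

lemma (in prob_space) prob_exponential_ge_affine:
  assumes DX: "distributed M lborel X (exponential_density l)"
    and DZ: "distributed M lborel Z (exponential_density m)"
    and indep: "indep_var lborel X lborel Z"
    and l: "0 < l" and m: "0 < m" and s: "0 \<le> s" and k: "0 \<le> k"
  shows "\<P>(\<omega> in M. s + k * Z \<omega> \<le> X \<omega>) = exp (- s * l) * m / (m + k * l)"
proof -
  define A where "A = {p :: real \<times> real. s + k * snd p \<le> fst p}"
  have "Measurable.pred (lborel \<Otimes>\<^sub>M lborel) (\<lambda>p :: real \<times> real. s + k * snd p \<le> fst p)"
    by measurable
  then have A[measurable]: "A \<in> sets (lborel \<Otimes>\<^sub>M lborel)"
    by (simp add: A_def pred_def space_pair_measure)
  have joint: "distributed M (lborel \<Otimes>\<^sub>M lborel) (\<lambda>\<omega>. (X \<omega>, Z \<omega>))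
      (\<lambda>(x, z). ennreal (exponential_density l x) * ennreal (exponential_density m z))"
    by (rule distributed_joint_indep[OF _ _ DX DZ indep]) (auto intro: lborel.sigma_finite_measure_axioms)
  have inner: "(\<integral>\<^sup>+x. ennreal (exponential_density l x) * ennreal (exponential_density m z)
        * indicator A (x, z) \<partial>lborel) = ennreal (m * exp (- s * l)) * (ennreal (exp (- (m + k * l) * z)) * indicator {0..} z)" for z
  proof (cases "0 \<le> z")
    case True
    have "(\<integral>\<^sup>+x. ennreal (exponential_density l x) * ennreal (exponential_density m z)
          * indicator A (x, z) \<partial>lborel)
        = ennreal (exponential_density m z) * (\<integral>\<^sup>+x\<in>{s + k * z..}. ennreal (exponential_density l x) \<partial>lborel)"
      by (subst nn_integral_cmult[symmetric], measurable)
         (auto intro!: nn_integral_cong simp: A_def mult.commute split: split_indicator)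
    also have "\<dots> = ennreal (m * exp (- z * m)) * ennreal (exp (- (s + k * z) * l))"
      using True s k
      by (subst nn_integral_exponential_density_atLeast[OF l]) (simp_all add: exponential_density_def)
    also have "\<dots> = ennreal (m * exp (- s * l)) * (ennreal (exp (- (m + k * l) * z)) * indicator {0..} z)"
      using True m by (simp add: ennreal_mult'[symmetric] exp_add[symmetric] algebra_simps)
    finally show ?thesis .
  qed (simp add: exponential_density_def)
  have "emeasure M ((\<lambda>\<omega>. (X \<omega>, Z \<omega>)) -` A \<inter> space M)
      = (\<integral>\<^sup>+z. \<integral>\<^sup>+x. ennreal (exponential_density l x) * ennreal (exponential_density m z)
          * indicator A (x, z) \<partial>lborel \<partial>lborel)"
    by (simp add: distributed_emeasure[OF joint A] lborel_pair.nn_integral_snd[symmetric] case_prod_beta)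
  also have "\<dots> = ennreal (m * exp (- s * l)) * (\<integral>\<^sup>+z\<in>{0..}. ennreal (exp (- (m + k * l) * z)) \<partial>lborel)"
    by (simp only: inner, rule nn_integral_cmult) measurable
  also have "\<dots> = ennreal (exp (- s * l) * m / (m + k * l))"
    using l m k
    by (subst nn_integral_exp_neg_mult_atLeast) (simp_all add: ennreal_mult'[symmetric] add_pos_nonneg)
  finally have "emeasure M ((\<lambda>\<omega>. (X \<omega>, Z \<omega>)) -` A \<inter> space M)
      = ennreal (exp (- s * l) * m / (m + k * l))" .
  moreover have "0 \<le> exp (- s * l) * m / (m + k * l)"
    using l m k by simp
  ultimately show ?thesis
    by (simp add: A_def emeasure_eq_measure vimage_def Int_def conj_commute)
qed

lemma (in prob_space) prob_exponential_ge_affine_and_ge: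
  assumes indep: "indep_vars (\<lambda>_. lborel) W {0, 1, 2 :: nat}"
    and D: "\<And>i. i \<in> {0, 1, 2} \<Longrightarrow> distributed M lborel (W i) (exponential_density 1)"
    and "0 \<le> s" "0 \<le> t" "0 \<le> k"
  shows "\<P>(\<omega> in M. s + k * W 2 \<omega> \<le> W 0 \<omega> \<and> t \<le> W 1 \<omega>) = exp (- s) / (1 + k) * exp (- t)"
proof -
  \<comment> \<open>Both sides of an indep_var must take values in the same type, so the pair (W 0, W 2) is
    represented by the restriction of W to {0, 2}.\<close>
  let ?V = "\<lambda>J \<omega>. restrict (\<lambda>i. W i \<omega>) J"
  define A where "A = {f \<in> space (PiM {0, 2 :: nat} (\<lambda>_. lborel)). s + k * f 2 \<le> (f 0 :: real)}"
  define B where "B = {f \<in> space (PiM {1 :: nat} (\<lambda>_. lborel)). t \<le> (f 1 :: real)}"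
  have "A \<in> sets (PiM {0, 2} (\<lambda>_. lborel))" "B \<in> sets (PiM {1} (\<lambda>_. lborel))"
    unfolding A_def B_def by measurable
  moreover have "indep_var (PiM {0, 2} (\<lambda>_. lborel)) (?V {0, 2}) (PiM {1} (\<lambda>_. lborel)) (?V {1})"
    using indep by (rule indep_var_restrict) auto
  ultimately have "prob ((\<lambda>\<omega>. (?V {0, 2} \<omega>, ?V {1} \<omega>)) -` (A \<times> B) \<inter> space M)
      = prob (?V {0, 2} -` A \<inter> space M) * prob (?V {1} -` B \<inter> space M)"
    by (intro indep_varD)
  moreover have "(\<lambda>\<omega>. (?V {0, 2} \<omega>, ?V {1} \<omega>)) -` (A \<times> B) \<inter> space M
      = {\<omega> \<in> space M. s + k * W 2 \<omega> \<le> W 0 \<omega> \<and> t \<le> W 1 \<omega>}"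
    "?V {0, 2} -` A \<inter> space M = {\<omega> \<in> space M. s + k * W 2 \<omega> \<le> W 0 \<omega>}"
    "?V {1} -` B \<inter> space M = {\<omega> \<in> space M. t \<le> W 1 \<omega>}"
    by (auto simp: A_def B_def space_PiM)
  moreover have "\<P>(\<omega> in M. s + k * W 2 \<omega> \<le> W 0 \<omega>) = exp (- s) / (1 + k)"
    using prob_exponential_ge_affine[OF D D indep_vars_indep_var[OF indep]] assms(3-) by simp
  moreover have "\<P>(\<omega> in M. t \<le> W 1 \<omega>) = exp (- t)"
    using exponential_distributedD_ge[OF D] assms(4) by simp
  ultimately show ?thesis
    by simp
qed

lemma secrecy_cap2_less_iff:
  fixes a b e :: complex
  assumes R: "0 < R" and \<alpha>: "0 < \<alpha>" and \<beta>: "0 < \<beta>" and g: "0 < g"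
  shows "secrecy_cap2 \<alpha> \<beta> g a b e < R \<longleftrightarrow>
    \<not> ((2 powr R - 1) / (\<alpha> * g) + 2 powr R / \<beta> * (cmod e)\<^sup>2 \<le> (cmod a)\<^sup>2
       \<and> (2 powr R - 1) / g \<le> (cmod b)\<^sup>2)"
proof -
  define x y z where "x = (cmod a)\<^sup>2" and "y = (cmod b)\<^sup>2" and "z = (cmod e)\<^sup>2"
  have "0 \<le> x" "0 \<le> y" "0 \<le> z"
    by (simp_all add: x_def y_def z_def)
  then have pos: "0 < 1 + \<alpha> * g * x" "0 < 1 + \<alpha> * g / \<beta> * z" "0 < 1 + g * y"
    using \<alpha> \<beta> g by (simp_all add: add_pos_nonneg)
  have "R \<le> log 2 ((1 + \<alpha> * g * x) / (1 + \<alpha> * g / \<beta> * z))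
      \<longleftrightarrow> 2 powr R * (1 + \<alpha> * g / \<beta> * z) \<le> 1 + \<alpha> * g * x"
    using pos by (simp add: le_log_iff pos_le_divide_eq)
  also have "\<dots> \<longleftrightarrow> (2 powr R - 1) / (\<alpha> * g) + 2 powr R / \<beta> * z \<le> x"
    using \<alpha> \<beta> g by (simp add: field_simps)
  finally have SR: "R \<le> log 2 ((1 + \<alpha> * g * x) / (1 + \<alpha> * g / \<beta> * z))
      \<longleftrightarrow> (2 powr R - 1) / (\<alpha> * g) + 2 powr R / \<beta> * z \<le> x" .
  have RD: "R \<le> log 2 (1 + g * y) \<longleftrightarrow> (2 powr R - 1) / g \<le> y"
    using pos g by (simp add: le_log_iff pos_divide_le_eq algebra_simps)
  show ?thesis
    using R SR RD by (auto simp: secrecy_cap2_def Let_def x_def y_def z_def)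
qed

lemma (in prob_space) outage_prob2_eq:
  assumes R: "0 < R" and \<alpha>: "0 < \<alpha>" and \<beta>: "0 < \<beta>" and \<gamma>D: "0 < \<gamma>D"
    and DSR: "distributed M lborel hSR (\<lambda>z. ennreal (cn01_density z))"
    and DRD: "distributed M lborel hRD (\<lambda>z. ennreal (cn01_density z))"
    and DSE: "distributed M lborel hSE (\<lambda>z. ennreal (cn01_density z))"
    and indep: "indep_vars (\<lambda>_. borel)
      (\<lambda>i::nat. if i = 0 then hSR else if i = 1 then hRD else hSE) {0, 1, 2}"
  shows "outage_prob2 M \<alpha> \<beta> R hSR hRD hSE \<gamma>D
    = 1 - exp (- ((2 powr R - 1) * (1 + 1 / \<alpha>) / \<gamma>D)) / (1 + (1 / \<beta>) * 2 powr R)"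
proof -
  define W where
    "W i \<omega> = (cmod ((if i = 0 then hSR else if i = 1 then hRD else hSE) \<omega>))\<^sup>2" for i :: nat and \<omega>
  have indep_W: "indep_vars (\<lambda>_. lborel) W {0, 1, 2}"
    unfolding W_def by (rule indep_vars_compose2[OF indep]) simp
  have D: "distributed M lborel (W i) (exponential_density 1)" if "i \<in> {0, 1, 2}" for i
    using that distributed_cmod_sq_cn01[OF DSR] distributed_cmod_sq_cn01[OF DRD]
      distributed_cmod_sq_cn01[OF DSE]
    by (auto simp: W_def[abs_def])
  have [measurable]: "W 0 \<in> borel_measurable M" "W 1 \<in> borel_measurable M" "W 2 \<in> borel_measurable M"
    using distributed_measurable[OF D] by simp_all
  let ?c = "2 powr R - 1"
  have "0 < ?c"
    using R by simp
  have "outage_prob2 M \<alpha> \<beta> R hSR hRD hSE \<gamma>D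
      = \<P>(\<omega> in M. \<not> (?c / (\<alpha> * \<gamma>D) + 2 powr R / \<beta> * W 2 \<omega> \<le> W 0 \<omega> \<and> ?c / \<gamma>D \<le> W 1 \<omega>))"
    unfolding outage_prob2_def using secrecy_cap2_less_iff[OF R \<alpha> \<beta> \<gamma>D] by (simp add: W_def)
  also have "\<dots> = 1 - \<P>(\<omega> in M.
      ?c / (\<alpha> * \<gamma>D) + 2 powr R / \<beta> * W 2 \<omega> \<le> W 0 \<omega> \<and> ?c / \<gamma>D \<le> W 1 \<omega>)"
    by (rule prob_neg) measurable
  also have "\<dots> = 1 - exp (- (?c / (\<alpha> * \<gamma>D))) / (1 + 2 powr R / \<beta>) * exp (- (?c / \<gamma>D))"
    using \<open>0 < ?c\<close> \<alpha> \<beta> \<gamma>D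
    by (subst prob_exponential_ge_affine_and_ge[OF indep_W D]) simp_all
  also have "\<dots> = 1 - exp (- ((2 powr R - 1) * (1 + 1 / \<alpha>) / \<gamma>D)) / (1 + (1 / \<beta>) * 2 powr R)"
    using \<alpha> \<gamma>D by (simp add: exp_add[symmetric] field_simps)
  finally show ?thesis .
qed

theorem theorem6:
  fixes M :: "'a measure" and hSR hRD hSE :: "'a \<Rightarrow> complex"
    and R \<alpha> \<beta> :: real
  assumes "prob_space M"
    and "R > 0" and "\<alpha> > 0" and "\<beta> > 0"
    and "distributed M lborel hSR (\<lambda>z. ennreal (cn01_density z))"
    and "distributed M lborel hRD (\<lambda>z. ennreal (cn01_density z))"
    and "distributed M lborel hSE (\<lambda>z. ennreal (cn01_density z))"
    and "prob_space.indep_vars M (\<lambda>_. borel)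
           (\<lambda>i::nat. if i = 0 then hSR else if i = 1 then hRD else hSE) {0, 1, 2}"
  shows "(outage_prob2 M \<alpha> \<beta> R hSR hRD hSE \<longlongrightarrow> 1 - 1 / (1 + (1/\<beta>) * 2 powr R)) at_top
       \<and> ((\<lambda>\<gamma>D. \<gamma>D * (outage_prob2 M \<alpha> \<beta> R hSR hRD hSE \<gamma>D - (1 - 1 / (1 + (1/\<beta>) * 2 powr R))))
            \<longlongrightarrow> (2 powr R - 1) * (1 + 1/\<alpha>) / (1 + (1/\<beta>) * 2 powr R)) at_top"
proof -
  interpret prob_space M by fact
  define K where "K = 1 + (1/\<beta>) * 2 powr R"
  define d where "d = (2 powr R - 1) * (1 + 1/\<alpha>)"
  have closed_form:
    "\<forall>\<^sub>F \<gamma> in at_top. outage_prob2 M \<alpha> \<beta> R hSR hRD hSE \<gamma> = 1 - exp (- (d / \<gamma>)) / K"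
    using eventually_gt_at_top[of 0]
    by eventually_elim (simp add: outage_prob2_eq[OF assms(2-4) _ assms(5-)] d_def K_def)
  have "0 < K"
    using assms(4) by (simp add: K_def add_pos_nonneg)
  have "((\<lambda>\<gamma>. exp (- (d / \<gamma>))) \<longlongrightarrow> 1) at_top"
    by real_asymp
  then have "((\<lambda>\<gamma>. 1 - exp (- (d / \<gamma>)) / K) \<longlongrightarrow> 1 - 1 / K) at_top"
    using \<open>0 < K\<close> by (intro tendsto_intros) auto
  moreover have "((\<lambda>\<gamma>. \<gamma> * (1 - exp (- (d / \<gamma>)))) \<longlongrightarrow> d) at_top"
    by real_asymp
  then have "((\<lambda>\<gamma>. \<gamma> * (1 - exp (- (d / \<gamma>))) / K) \<longlongrightarrow> d / K) at_top"
    using \<open>0 < K\<close> by (intro tendsto_intros) auto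
  then have "((\<lambda>\<gamma>. \<gamma> * ((1 - exp (- (d / \<gamma>)) / K) - (1 - 1 / K))) \<longlongrightarrow> d / K) at_top"
    by (simp add: diff_divide_distrib[symmetric])
  ultimately show ?thesis
    unfolding K_def[symmetric] d_def[symmetric]
    using closed_form by (auto elim: tendsto_cong[THEN iffD1, rotated] simp: eventually_mono)
qed

end
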